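(* For every $n\ge2$ and every $m\in\mathbb N$, $$\lim_{\theta\searrow0}\Theta(m,\theta,n-1)=N_m(\mathbb S^{n-1}).$$
   Context: $\mathbb S^{n-1}$ is the unit sphere in $\mathbb R^n$ with standard measure $\mu_{\mathbb S^{n-1}}$. $\mathcal P_m$ denotes the polynomials on $\mathbb R^n$ of degree at most $m$, and $\mathring{\mathcal P}_m=\{p\in\mathcal P_m:\int_{\mathbb S^{n-1}}p\,d\mu_{\mathbb S^{n-1}}=0\}$. $\mathcal M^c_m(\mathbb S^{n-1})$ is the set of probability measures $\nu$ on $\mathbb S^{n-1}$ supported on a countable set $\{\xi_i\}$ with $\int p\,d\nu=0$ for all $p\in\mathring{\mathcal P}_m$. For $0<\theta<1$, $\Theta(m,\theta,n-1)=\inf\{\sum_i\nu_i^\theta:\ \nu\in\mathcal M^c_m(\mathbb S^{n-1})\text{ supported on }\{\xi_i\},\ \nu_i=\nu(\{\xi_i\})\}$. $N_m(\mathbb S^{n-1})$ is the smallest $N\in\mathbb N$ for which there exist $x_1,\dots,x_N\in\mathbb S^{n-1}$ and $\nu_1,\dots,\nu_N\ge0$ with $\sum_i\nu_i=1$ and $\sum_i\nu_ip(x_i)=0$ for all $p\in\mathring{\mathcal P}_m$. *)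

theory Defs
  imports "HOL-Analysis.Analysis" "HOL-Probability.Probability"
begin

definition multi_idx :: "nat \<Rightarrow> ('n::finite \<Rightarrow> nat) set" where
  "multi_idx m = {\<alpha>. (\<Sum>i\<in>UNIV. \<alpha> i) \<le> m}"

definition polys :: "nat \<Rightarrow> ((real^'n::finite) \<Rightarrow> real) set" where
  "polys m = {p. \<exists>c :: ('n \<Rightarrow> nat) \<Rightarrow> real.
      p = (\<lambda>x. \<Sum>\<alpha>\<in>multi_idx m. c \<alpha> * (\<Prod>i\<in>UNIV. (x $ i) ^ (\<alpha> i)))}"

text \<open>Standard (surface) measure on the unit sphere, via the cone construction:
  sigma(A) = n * lebesgue{ t x : x in A, 0 < t <= 1 }, i.e. n times the push-forward
  of Lebesgue measure on the punctured unit ball under radial projection.\<close>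
definition sphere_measure :: "(real^'n::finite) measure" where
  "sphere_measure = scale_measure (of_nat CARD('n))
     (distr (restrict_space lborel (ball 0 1 - {0})) (restrict_space borel (sphere 0 1))
        (\<lambda>x. x /\<^sub>R norm x))"

definition polys0 :: "nat \<Rightarrow> ((real^'n::finite) \<Rightarrow> real) set" where
  "polys0 m = {p \<in> polys m. integral\<^sup>L sphere_measure p = 0}"

text \<open>M^c_m(S^{n-1}): probability measures on the sphere with countable support
  (i.e. discrete probability measures = pmfs) integrating every p in polys0 m to 0.\<close>
definition Mc :: "nat \<Rightarrow> (real^'n::finite) pmf set" where
  "Mc m = {\<nu>. set_pmf \<nu> \<subseteq> sphere 0 1 \<and>
              (\<forall>p\<in>polys0 m. measure_pmf.expectation \<nu> p = 0)}"

definition Theta :: "'n::finite itself \<Rightarrow> nat \<Rightarrow> real \<Rightarrow> ennreal" where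
  "Theta _ m \<theta> = (INF \<nu>\<in>(Mc m :: (real^'n) pmf set).
      (\<Sum>\<^sub>\<infinity>x\<in>set_pmf \<nu>. ennreal (pmf \<nu> x powr \<theta>)))"

definition Nm :: "'n::finite itself \<Rightarrow> nat \<Rightarrow> nat" where
  "Nm _ m = (LEAST N. \<exists>(x :: nat \<Rightarrow> real^'n) (w :: nat \<Rightarrow> real).
      (\<forall>i<N. x i \<in> sphere 0 1 \<and> w i \<ge> 0) \<and> (\<Sum>i<N. w i) = 1 \<and>
      (\<forall>p\<in>polys0 m. (\<Sum>i<N. w i * p (x i)) = 0))"

end

theory Submission
  imports Defs "HOL-Library.Function_Algebras"
begin

text \<open>A Tchakaloff-type argument shows that cubatures exist: among configurations of as many
  weighted points as there are monomials of degree at most \<open>m\<close>, one minimising the distance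
  between its moments and the spherical moments exists by compactness; by first-order optimality
  and Carath\'eodory's theorem the defect vector is separated from the moment curve by a
  hyperplane, yet the spherical moments are an average over that curve, so the defect vanishes.
  Hence \<open>N = Nm\<close> is attained, and a cubature with \<open>N\<close> nodes gives \<open>\<Theta> \<le> N\<close> since each
  \<open>\<nu>\<^sub>i powr \<theta> \<le> 1\<close>.

  Conversely, by compactness and the minimality of \<open>N\<close>, there is \<open>\<delta> > 0\<close> such that no measure
  in \<open>Mc m\<close> puts mass above \<open>1 - \<delta>\<close> on fewer than \<open>N\<close> points. Splitting the atoms at the
  threshold \<open>t = (\<delta>/2N)\<^sup>2\<close> then yields \<open>\<Sum> \<nu>\<^sub>i powr \<theta> \<ge> N t powr \<theta>\<close> for
  \<open>\<theta> \<le> 1/2\<close>, and \<open>N t powr \<theta> \<rightarrow> N\<close> as \<open>\<theta> \<rightarrow> 0\<close>.\<close>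

section \<open>Polynomials on the sphere\<close>

definition monomial :: "('n::finite \<Rightarrow> nat) \<Rightarrow> real^'n \<Rightarrow> real" where
  "monomial \<alpha> x = (\<Prod>i\<in>UNIV. (x $ i) ^ (\<alpha> i))"

lemma monomial_zero [simp]: "monomial (\<lambda>_. 0) = (\<lambda>_. 1)"
  by (simp add: monomial_def fun_eq_iff)

lemma polys_iff_monomials:
  "p \<in> polys m \<longleftrightarrow> (\<exists>c. p = (\<lambda>x. \<Sum>\<alpha>\<in>multi_idx m. c \<alpha> * monomial \<alpha> x))"
  by (simp add: polys_def monomial_def)

lemma zero_in_multi_idx: "(\<lambda>_. 0) \<in> multi_idx m"
  by (simp add: multi_idx_def)

lemma finite_multi_idx: "finite (multi_idx m :: ('n::finite \<Rightarrow> nat) set)"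
proof (rule finite_subset)
  show "multi_idx m \<subseteq> PiE (UNIV::'n set) (\<lambda>_. {..m})"
  proof
    fix \<alpha> :: "'n \<Rightarrow> nat" assume "\<alpha> \<in> multi_idx m"
    then have "\<alpha> i \<le> m" for i
      using member_le_sum[of i UNIV \<alpha>] by (simp add: multi_idx_def)
    then show "\<alpha> \<in> PiE UNIV (\<lambda>_. {..m})" by auto
  qed
qed (rule finite_PiE; auto)

lemma tendsto_monomial:
  "(f \<longlongrightarrow> (x::real^'n::finite)) F \<Longrightarrow> ((\<lambda>k. monomial \<alpha> (f k)) \<longlongrightarrow> monomial \<alpha> x) F"
  unfolding monomial_def by (intro tendsto_prod tendsto_power tendsto_vec_nth) auto

lemma tendsto_polys:
  assumes "p \<in> polys m" "(f \<longlongrightarrow> (x::real^'n::finite)) F"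
  shows "((\<lambda>k. p (f k)) \<longlongrightarrow> p x) F"
proof -
  obtain c where "p = (\<lambda>x. \<Sum>\<alpha>\<in>multi_idx m. c \<alpha> * monomial \<alpha> x)"
    using assms(1) polys_iff_monomials by blast
  then show ?thesis
    using assms(2) by (auto intro!: tendsto_sum tendsto_mult tendsto_monomial)
qed

lemma continuous_on_monomial: "continuous_on A (monomial \<alpha>)"
  unfolding monomial_def by (intro continuous_intros)

lemma continuous_on_polys: "p \<in> polys m \<Longrightarrow> continuous_on A p"
  unfolding polys_iff_monomials by (auto intro!: continuous_intros continuous_on_monomial)

lemma polys_bounded_on_sphere:
  assumes "p \<in> polys m"
  obtains B where "\<And>x. x \<in> sphere (0::real^'n::finite) 1 \<Longrightarrow> \<bar>p x\<bar> \<le> B"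
proof -
  have "compact (p ` sphere 0 1)"
    by (intro compact_continuous_image continuous_on_polys[OF assms]) auto
  then show ?thesis
    using that compact_imp_bounded bounded_iff by (metis image_eqI real_norm_def)
qed

lemma sphere_nonempty: "sphere (0::real^'n::finite) 1 \<noteq> {}"
  by (simp add: sphere_eq_empty)

lemma compact_finite_family_convergent_subseq:
  fixes f :: "nat \<Rightarrow> nat \<Rightarrow> 'a::metric_space"
  assumes "compact K" "\<And>k i. i < D \<Longrightarrow> f k i \<in> K"
  shows "\<exists>l r. strict_mono r \<and> (\<forall>i<D. l i \<in> K \<and> ((\<lambda>k. f (r k) i) \<longlonglongrightarrow> l i))"
  using assms(2)
proof (induction D)
  case 0
  show ?case by (rule exI[of _ undefined], rule exI[of _ id]) (auto simp: strict_mono_def)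
next
  case (Suc D)
  then obtain l r where r: "strict_mono r"
    and l: "\<forall>i<D. l i \<in> K \<and> ((\<lambda>k. f (r k) i) \<longlonglongrightarrow> l i)"
    by auto
  have "\<forall>k. f (r k) D \<in> K" using Suc.prems by auto
  then obtain a r' where a: "a \<in> K" and r': "strict_mono r'"
    and lim: "((\<lambda>k. f (r k) D) \<circ> r') \<longlonglongrightarrow> a"
    using assms(1) unfolding compact_eq_seq_compact_metric seq_compact_def by meson
  have "(\<lambda>k. f (r (r' k)) i) \<longlonglongrightarrow> l i" if "i < D" for i
    using LIMSEQ_subseq_LIMSEQ[OF _ r'] l that by (auto simp: o_def)
  then have "\<forall>i<Suc D. (l(D := a)) i \<in> K \<and> ((\<lambda>k. f ((r \<circ> r') k) i) \<longlonglongrightarrow> (l(D := a)) i)"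
    using l a lim by (auto simp: less_Suc_eq o_def)
  then show ?case
    using r r' strict_mono_o by blast
qed

lemma finite_sum_as_padded_sum:
  fixes u :: "'b \<Rightarrow> real" and pts :: "'b \<Rightarrow> 'a"
  assumes J: "finite J" "card J \<le> D" and pts: "pts ` J \<subseteq> S" and S: "S \<noteq> {}"
  obtains x w where "\<And>i. i < D \<Longrightarrow> x i \<in> S" "\<And>i. w i \<in> insert 0 (u ` J)"
    "\<And>f. (\<Sum>i<D. w i * f (x i)) = (\<Sum>j\<in>J. u j * f (pts j))"
proof -
  obtain e where e: "bij_betw e {..<card J} J"
    using bij_betw_from_nat_into_finite[OF J(1)] by blast
  obtain s where s: "s \<in> S" using S by blast
  define x where "x i = (if i < card J then pts (e i) else s)" for i
  define w where "w i = (if i < card J then u (e i) else 0)" for i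
  have eJ: "e i \<in> J" if "i < card J" for i
    using e that by (auto simp: bij_betw_def)
  have "(\<Sum>i<D. w i * f (x i)) = (\<Sum>j\<in>J. u j * f (pts j))" for f
  proof -
    have "(\<Sum>i<D. w i * f (x i)) = (\<Sum>i<card J. u (e i) * f (pts (e i)))"
      using J(2) by (subst sum.mono_neutral_right[of "{..<D}" "{..<card J}"])
        (auto simp: w_def x_def)
    also have "\<dots> = (\<Sum>j\<in>J. u j * f (pts j))"
      by (rule sum.reindex_bij_betw[OF e])
    finally show ?thesis .
  qed
  moreover have "x i \<in> S" for i
    using pts s eJ by (auto simp: x_def)
  moreover have "w i \<in> insert 0 (u ` J)" for i
    using eJ by (auto simp: w_def)
  ultimately show ?thesis using that by blast
qed

section \<open>Surface measure and spherical moments\<close>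

lemma space_sphere_measure: "space (sphere_measure :: (real^'n::finite) measure) = sphere 0 1"
  unfolding sphere_measure_def by (simp add: space_restrict_space space_scale_measure)

lemma sets_sphere_measure:
  "sets (sphere_measure :: (real^'n::finite) measure) = sets (restrict_space borel (sphere 0 1))"
  unfolding sphere_measure_def by (simp add: sets_scale_measure)

lemma emeasure_sphere_measure:
  "emeasure (sphere_measure :: (real^'n::finite) measure) (sphere 0 1)
     = of_nat CARD('n) * emeasure lborel (ball (0::real^'n) 1)"
proof -
  let ?L = "restrict_space lborel (ball (0::real^'n) 1 - {0})"
  let ?B = "restrict_space borel (sphere (0::real^'n) 1)"
  have meas: "(\<lambda>x::real^'n. x /\<^sub>R norm x) \<in> measurable ?L ?B"
  proof (rule measurable_restrict_space2)
    show "(\<lambda>x::real^'n. x /\<^sub>R norm x) \<in> ?L \<rightarrow>\<^sub>M borel"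
      by (rule measurable_restrict_space1) measurable
  qed (auto simp: space_restrict_space)
  have "emeasure (distr ?L ?B (\<lambda>x. x /\<^sub>R norm x)) (sphere 0 1)
        = emeasure ?L ((\<lambda>x. x /\<^sub>R norm x) -` sphere 0 1 \<inter> space ?L)"
    by (rule emeasure_distr[OF meas]) (simp add: sets_restrict_space_iff)
  also have "(\<lambda>x::real^'n. x /\<^sub>R norm x) -` sphere 0 1 \<inter> space ?L = ball 0 1 - {0}"
    by (auto simp: space_restrict_space)
  also have "emeasure ?L (ball 0 1 - {0}) = emeasure lborel (ball (0::real^'n) 1 - {0})"
    by (rule emeasure_restrict_space) auto
  also have "\<dots> = emeasure lborel (ball (0::real^'n) 1)"
    by (rule emeasure_Diff_null_set) (auto intro: finite_imp_null_set_lborel)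
  finally show ?thesis
    unfolding sphere_measure_def by (simp add: emeasure_scale_measure)
qed

definition sphere_area :: "'n::finite itself \<Rightarrow> real" where
  "sphere_area _ = measure (sphere_measure :: (real^'n) measure) (sphere 0 1)"

lemma emeasure_sphere_measure_eq_area:
    "emeasure (sphere_measure :: (real^'n::finite) measure) (sphere 0 1) = ennreal (sphere_area TYPE('n))"
  and sphere_area_pos: "sphere_area TYPE('n) > 0"
proof -
  have pos: "unit_ball_vol (real DIM(real^'n)) > 0"
    by (rule unit_ball_vol_pos) simp
  have e: "emeasure (sphere_measure :: (real^'n) measure) (sphere 0 1)
      = ennreal (real CARD('n) * unit_ball_vol (real DIM(real^'n)))"
    unfolding emeasure_sphere_measure using pos
    by (simp add: emeasure_ball ennreal_mult ennreal_of_nat_eq_real_of_nat)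
  then show "emeasure (sphere_measure :: (real^'n) measure) (sphere 0 1) = ennreal (sphere_area TYPE('n))"
    unfolding sphere_area_def measure_def using pos by simp
  show "sphere_area TYPE('n) > 0"
    unfolding sphere_area_def measure_def e using pos by simp
qed

lemma finite_measure_sphere_measure: "finite_measure (sphere_measure :: (real^'n::finite) measure)"
  by (rule finite_measureI) (simp add: space_sphere_measure emeasure_sphere_measure_eq_area)

lemma integrable_sphere_measure_continuous:
  assumes "continuous_on UNIV (h :: real^'n::finite \<Rightarrow> real)"
  shows "integrable sphere_measure h"
proof -
  interpret finite_measure "sphere_measure :: (real^'n) measure"
    by (rule finite_measure_sphere_measure)
  have "compact (h ` sphere 0 1)"
    by (intro compact_continuous_image continuous_on_subset[OF assms]) auto
  then obtain B where B: "\<forall>y\<in>h ` sphere 0 1. norm y \<le> B"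
    using compact_imp_bounded bounded_iff by metis
  show ?thesis
  proof (rule integrable_const_bound[where B=B])
    show "AE x in sphere_measure. norm (h x) \<le> B"
      using B by (intro AE_I2) (auto simp: space_sphere_measure)
    show "h \<in> borel_measurable sphere_measure"
      unfolding measurable_cong_sets[OF sets_sphere_measure refl]
      by (rule measurable_restrict_space1) (rule borel_measurable_continuous_onI[OF assms])
  qed
qed

definition sphere_moment :: "('n::finite \<Rightarrow> nat) \<Rightarrow> real" where
  "sphere_moment \<alpha> =
     integral\<^sup>L (sphere_measure :: (real^'n) measure) (monomial \<alpha>) / sphere_area TYPE('n)"

lemma integral_sphere_measure_monomials:
  fixes c :: "('n::finite \<Rightarrow> nat) \<Rightarrow> real"
  assumes "finite M"
  shows "integral\<^sup>L (sphere_measure :: (real^'n) measure) (\<lambda>y. \<Sum>\<alpha>\<in>M. c \<alpha> * monomial \<alpha> y)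
         = sphere_area TYPE('n) * (\<Sum>\<alpha>\<in>M. c \<alpha> * sphere_moment \<alpha>)"
proof -
  have "integral\<^sup>L sphere_measure (\<lambda>y. \<Sum>\<alpha>\<in>M. c \<alpha> * monomial \<alpha> y)
      = (\<Sum>\<alpha>\<in>M. c \<alpha> * integral\<^sup>L (sphere_measure :: (real^'n) measure) (monomial \<alpha>))"
    by (subst Bochner_Integration.integral_sum)
      (auto intro!: integrable_sphere_measure_continuous continuous_intros continuous_on_monomial)
  then show ?thesis
    using sphere_area_pos[where 'n='n]
    by (simp add: sphere_moment_def sum_distrib_left field_simps)
qed

lemma sphere_moment_zero: "sphere_moment (\<lambda>_::'n::finite. 0) = 1"
  using sphere_area_pos[where 'n='n]
  by (simp add: sphere_moment_def space_sphere_measure sphere_area_def)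

lemma sphere_moment_sum_le:
  fixes c :: "('n::finite \<Rightarrow> nat) \<Rightarrow> real"
  assumes "finite M" and le: "\<And>y. y \<in> sphere (0::real^'n) 1 \<Longrightarrow> (\<Sum>\<alpha>\<in>M. c \<alpha> * monomial \<alpha> y) \<le> K"
  shows "(\<Sum>\<alpha>\<in>M. c \<alpha> * sphere_moment \<alpha>) \<le> K"
proof -
  interpret finite_measure "sphere_measure :: (real^'n) measure"
    by (rule finite_measure_sphere_measure)
  have "sphere_area TYPE('n) * (\<Sum>\<alpha>\<in>M. c \<alpha> * sphere_moment \<alpha>)
      = integral\<^sup>L sphere_measure (\<lambda>y. \<Sum>\<alpha>\<in>M. c \<alpha> * monomial \<alpha> y)"
    by (rule integral_sphere_measure_monomials[OF assms(1), symmetric])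
  also have "\<dots> \<le> integral\<^sup>L (sphere_measure :: (real^'n) measure) (\<lambda>y. K)"
    by (rule integral_mono)
      (use le in \<open>auto simp: space_sphere_measure
        intro!: integrable_sphere_measure_continuous continuous_intros continuous_on_monomial\<close>)
  also have "\<dots> = sphere_area TYPE('n) * K"
    by (simp add: space_sphere_measure sphere_area_def)
  finally show ?thesis
    using sphere_area_pos[where 'n='n] by simp
qed

definition cubature :: "'n::finite itself \<Rightarrow> nat \<Rightarrow> nat \<Rightarrow> bool" where
  "cubature _ m N \<longleftrightarrow> (\<exists>(x :: nat \<Rightarrow> real^'n) (w :: nat \<Rightarrow> real).
      (\<forall>i<N. x i \<in> sphere 0 1 \<and> w i \<ge> 0) \<and> (\<Sum>i<N. w i) = 1 \<and>
      (\<forall>p\<in>polys0 m. (\<Sum>i<N. w i * p (x i)) = 0))"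

lemma Nm_eq_Least_cubature: "Nm TYPE('n::finite) m = (LEAST N. cubature TYPE('n) m N)"
  unfolding Nm_def cubature_def by simp

lemma cubature_of_sphere_moments:
  fixes x :: "nat \<Rightarrow> real^'n::finite"
  assumes nodes: "\<And>i. i < N \<Longrightarrow> x i \<in> sphere 0 1 \<and> w i \<ge> 0"
    and moments: "\<And>\<alpha>. \<alpha> \<in> multi_idx m \<Longrightarrow> (\<Sum>i<N. w i * monomial \<alpha> (x i)) = sphere_moment \<alpha>"
  shows "cubature TYPE('n) m N"
  unfolding cubature_def
proof (intro exI conjI ballI allI impI)
  show "(\<Sum>i<N. w i) = 1"
    using moments[OF zero_in_multi_idx] by (simp add: sphere_moment_zero)
next
  fix p :: "real^'n \<Rightarrow> real" assume p: "p \<in> polys0 m"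
  then obtain c where c: "p = (\<lambda>x. \<Sum>\<alpha>\<in>multi_idx m. c \<alpha> * monomial \<alpha> x)"
    by (auto simp: polys0_def polys_iff_monomials)
  have "sphere_area TYPE('n) * (\<Sum>\<alpha>\<in>multi_idx m. c \<alpha> * sphere_moment \<alpha>) = 0"
    using p unfolding c polys0_def by (simp add: integral_sphere_measure_monomials finite_multi_idx)
  then have "(\<Sum>\<alpha>\<in>multi_idx m. c \<alpha> * sphere_moment \<alpha>) = 0"
    using sphere_area_pos[where 'n='n] by simp
  moreover have "(\<Sum>i<N. w i * p (x i)) = (\<Sum>\<alpha>\<in>multi_idx m. c \<alpha> * (\<Sum>i<N. w i * monomial \<alpha> (x i)))"
    unfolding c by (simp add: sum_distrib_left sum_distrib_right sum.swap[of _ "{..<N}"] mult_ac)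
  ultimately show "(\<Sum>i<N. w i * p (x i)) = 0"
    using moments by simp
qed (use nodes in auto)

section \<open>Carath\'eodory reduction\<close>

lemma fun_vector_space: "vector_space (\<lambda>(r::real) (f::'b \<Rightarrow> real). (\<lambda>i. r * f i))"
  by unfold_locales (auto simp: algebra_simps fun_eq_iff)

lemma sum_fun_apply: "(sum f A) x = (\<Sum>a\<in>A. f a x)" for f :: "'c \<Rightarrow> 'b \<Rightarrow> real"
  by (induction A rule: infinite_finite_induct) (auto simp: func_plus func_zero)

lemma fun_dependent_card_gt:
  fixes V :: "('b \<Rightarrow> real) set"
  assumes M: "finite M" and supp: "\<And>v \<beta>. v \<in> V \<Longrightarrow> \<beta> \<notin> M \<Longrightarrow> v \<beta> = 0"
    and card: "card V > card M"
  shows "module.dependent (\<lambda>(r::real) f i. r * f i) V"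
proof -
  interpret fv: vector_space "\<lambda>(r::real) (f::'b \<Rightarrow> real). (\<lambda>i. r * f i)"
    by (rule fun_vector_space)
  define e where "e \<alpha> = (\<lambda>\<beta>::'b. if \<beta> = \<alpha> then 1 else (0::real))" for \<alpha>
  have "v \<in> fv.span (e ` M)" if v: "v \<in> V" for v
  proof -
    have "v = (\<Sum>\<alpha>\<in>M. (\<lambda>\<beta>. v \<alpha> * e \<alpha> \<beta>))"
      using supp[OF v] M
      by (auto simp: fun_eq_iff sum_fun_apply e_def if_distrib[of "\<lambda>z. _ * z"] cong: if_cong)
    also have "\<dots> \<in> fv.span (e ` M)"
      by (intro fv.span_sum fv.span_scale fv.span_base) auto
    finally show ?thesis .
  qed
  moreover have "card (e ` M) \<le> card M"
    by (rule card_image_le[OF M])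
  ultimately show ?thesis
    using fv.independent_span_bound[of "e ` M" V] M card by fastforce
qed

lemma linear_dependence_card_gt:
  fixes v :: "'i \<Rightarrow> 'b \<Rightarrow> real"
  assumes M: "finite M" and I: "finite I" and supp: "\<And>i \<beta>. i \<in> I \<Longrightarrow> \<beta> \<notin> M \<Longrightarrow> v i \<beta> = 0"
    and card: "card I > card M"
  obtains w where "\<And>\<beta>. (\<Sum>i\<in>I. w i * v i \<beta>) = 0" "\<exists>i\<in>I. w i \<noteq> 0"
proof (cases "inj_on v I")
  case False
  then obtain a b where ab: "a \<in> I" "b \<in> I" "a \<noteq> b" "v a = v b"
    unfolding inj_on_def by blast
  define w where "w i = (if i = a then 1 else if i = b then -1 else (0::real))" for i
  show ?thesis
  proof (rule that)
    fix \<beta>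
    have "(\<Sum>i\<in>I. w i * v i \<beta>) = v a \<beta> - v b \<beta>"
      using I ab(1-3) by (simp add: w_def if_distrib[of "\<lambda>z. z * _"] sum.If_cases Int_absorb1)
    then show "(\<Sum>i\<in>I. w i * v i \<beta>) = 0"
      using ab(4) by simp
  qed (use ab in \<open>auto simp: w_def\<close>)
next
  case inj: True
  interpret fv: vector_space "\<lambda>(r::real) (f::'b \<Rightarrow> real). (\<lambda>i. r * f i)"
    by (rule fun_vector_space)
  have "fv.dependent (v ` I)"
    using supp card card_image[OF inj] by (intro fun_dependent_card_gt[OF M]) auto
  then obtain t cf where t: "finite t" "t \<subseteq> v ` I" "(\<Sum>y\<in>t. (\<lambda>\<beta>. cf y * y \<beta>)) = 0"
    "\<exists>y\<in>t. cf y \<noteq> 0"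
    unfolding fv.dependent_explicit by blast
  define w where "w i = (if v i \<in> t then cf (v i) else 0)" for i
  define I' where "I' = {i\<in>I. v i \<in> t}"
  have inj': "inj_on v I'"
    using inj by (rule inj_on_subset) (auto simp: I'_def)
  have tI: "t = v ` I'"
    using t(2) by (auto simp: I'_def)
  have "(\<Sum>i\<in>I. w i * v i \<beta>) = 0" for \<beta>
  proof -
    have "(\<Sum>i\<in>I. w i * v i \<beta>) = (\<Sum>i\<in>I'. cf (v i) * v i \<beta>)"
      unfolding I'_def using I by (intro sum.mono_neutral_cong_right) (auto simp: w_def)
    also have "\<dots> = (\<Sum>y\<in>t. cf y * y \<beta>)"
      unfolding tI by (rule sum.reindex[OF inj', symmetric, unfolded o_def])
    also have "\<dots> = (\<Sum>y\<in>t. (\<lambda>\<beta>. cf y * y \<beta>)) \<beta>"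
      by (simp add: sum_fun_apply)
    finally show ?thesis
      using t(3) by simp
  qed
  moreover have "\<exists>i\<in>I. w i \<noteq> 0"
    using t(2,4) by (auto simp: w_def)
  ultimately show ?thesis
    using that by blast
qed

lemma nonneg_shift_to_zero:
  fixes u w :: "'i \<Rightarrow> real"
  assumes I: "finite I" and u: "\<And>i. i \<in> I \<Longrightarrow> u i \<ge> 0" and neg: "\<exists>i\<in>I. w i < 0"
  obtains \<tau> a where "\<tau> \<ge> 0" "a \<in> I" "u a + \<tau> * w a = 0" "\<And>i. i \<in> I \<Longrightarrow> u i + \<tau> * w i \<ge> 0"
proof -
  define Neg where "Neg = {i\<in>I. w i < 0}"
  have Neg: "finite Neg" "Neg \<noteq> {}"
    using I neg by (auto simp: Neg_def)
  define \<tau> where "\<tau> = Min ((\<lambda>i. u i / (- w i)) ` Neg)"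
  have "\<tau> \<in> (\<lambda>i. u i / (- w i)) ` Neg"
    unfolding \<tau>_def using Neg by (intro Min_in) auto
  then obtain a where a: "a \<in> Neg" "\<tau> = u a / (- w a)"
    by blast
  have "u i + \<tau> * w i \<ge> 0" if i: "i \<in> I" for i
  proof (cases "w i < 0")
    case True
    then have "\<tau> \<le> u i / (- w i)"
      unfolding \<tau>_def using Neg i by (intro Min_le) (auto simp: Neg_def)
    then have "\<tau> * (- w i) \<le> u i / (- w i) * (- w i)"
      using True by (intro mult_right_mono) auto
    then show ?thesis
      using True by simp
  next
    case False
    moreover have "\<tau> \<ge> 0"
      using a u by (auto simp: Neg_def divide_nonneg_neg)
    ultimately show ?thesis
      using u[OF i] by simp
  qed
  moreover have "\<tau> \<ge> 0" "a \<in> I" "u a + \<tau> * w a = 0"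
    using a u by (auto simp: Neg_def divide_nonneg_neg)
  ultimately show ?thesis
    using that by blast
qed

text \<open>Carath\'eodory for conic combinations. Since the test functions contain the constant 1,
  every linear dependence has a negative coefficient and can be used to remove a point.\<close>
lemma caratheodory_reduction_step:
  fixes g :: "'b \<Rightarrow> 'a \<Rightarrow> real" and pts :: "'i \<Rightarrow> 'a"
  assumes M: "finite M" and c: "c \<in> M" "\<And>x. g c x = 1"
    and I: "finite I" "card I > card M" and u: "\<And>i. i \<in> I \<Longrightarrow> u i \<ge> 0"
  obtains a u' where "a \<in> I" "\<And>i. i \<in> I - {a} \<Longrightarrow> u' i \<ge> 0"
    "\<And>\<alpha>. \<alpha> \<in> M \<Longrightarrow> (\<Sum>i\<in>I - {a}. u' i * g \<alpha> (pts i)) = (\<Sum>i\<in>I. u i * g \<alpha> (pts i))"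
proof -
  obtain w where w: "\<And>\<beta>. (\<Sum>i\<in>I. w i * (if \<beta> \<in> M then g \<beta> (pts i) else 0)) = 0"
    "\<exists>i\<in>I. w i \<noteq> 0"
    using linear_dependence_card_gt[OF M I(1) _ I(2),
        where v = "\<lambda>i \<beta>. if \<beta> \<in> M then g \<beta> (pts i) else 0"] by auto
  have wg: "(\<Sum>i\<in>I. w i * g \<alpha> (pts i)) = 0" if "\<alpha> \<in> M" for \<alpha>
    using w(1)[of \<alpha>] that by simp
  have "\<exists>i\<in>I. w i < 0"
  proof (rule ccontr)
    assume "\<not> (\<exists>i\<in>I. w i < 0)"
    then have "\<forall>i\<in>I. w i \<ge> 0" by auto
    moreover have "(\<Sum>i\<in>I. w i) = 0"
      using wg[OF c(1)] c(2) by simp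
    ultimately have "\<forall>i\<in>I. w i = 0"
      using sum_nonneg_eq_0_iff[OF I(1)] by blast
    then show False
      using w(2) by blast
  qed
  then obtain \<tau> a where \<tau>: "a \<in> I" "u a + \<tau> * w a = 0" "\<And>i. i \<in> I \<Longrightarrow> u i + \<tau> * w i \<ge> 0"
    using nonneg_shift_to_zero[where u = u and w = w, OF I(1) u] by blast
  define u' where "u' i = u i + \<tau> * w i" for i
  show ?thesis
  proof
    show "a \<in> I" "\<And>i. i \<in> I - {a} \<Longrightarrow> u' i \<ge> 0"
      using \<tau> by (auto simp: u'_def)
  next
    fix \<alpha> assume \<alpha>: "\<alpha> \<in> M"
    have "(\<Sum>i\<in>I - {a}. u' i * g \<alpha> (pts i)) = (\<Sum>i\<in>I. u' i * g \<alpha> (pts i))"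
      using \<tau>(1,2) I(1) by (simp add: sum_diff1 u'_def)
    also have "\<dots> = (\<Sum>i\<in>I. u i * g \<alpha> (pts i)) + \<tau> * (\<Sum>i\<in>I. w i * g \<alpha> (pts i))"
      by (simp add: u'_def algebra_simps sum.distrib sum_distrib_left)
    finally show "(\<Sum>i\<in>I - {a}. u' i * g \<alpha> (pts i)) = (\<Sum>i\<in>I. u i * g \<alpha> (pts i))"
      using wg[OF \<alpha>] by simp
  qed
qed

lemma caratheodory_reduction:
  fixes g :: "'b \<Rightarrow> 'a \<Rightarrow> real" and pts :: "'i \<Rightarrow> 'a"
  assumes M: "finite M" and c: "c \<in> M" "\<And>x. g c x = 1"
    and I: "finite I" and u: "\<And>i. i \<in> I \<Longrightarrow> u i \<ge> 0"
  shows "\<exists>J u'. J \<subseteq> I \<and> card J \<le> card M \<and> (\<forall>i\<in>J. u' i \<ge> 0) \<and>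
           (\<forall>\<alpha>\<in>M. (\<Sum>i\<in>J. u' i * g \<alpha> (pts i)) = (\<Sum>i\<in>I. u i * g \<alpha> (pts i)))"
  using I u
proof (induction "card I" arbitrary: I u rule: less_induct)
  case less
  show ?case
  proof (cases "card I \<le> card M")
    case False
    then have less_card: "card M < card I" by simp
    obtain a u' where a: "a \<in> I" "\<And>i. i \<in> I - {a} \<Longrightarrow> u' i \<ge> 0"
      "\<And>\<alpha>. \<alpha> \<in> M \<Longrightarrow> (\<Sum>i\<in>I - {a}. u' i * g \<alpha> (pts i)) = (\<Sum>i\<in>I. u i * g \<alpha> (pts i))"
      by (rule caratheodory_reduction_step[where M = M and c = c and g = g and I = I and u = u and pts = pts])
        (use M c less.prems less_card in auto)
    have card_less: "card (I - {a}) < card I"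
      using a(1) less.prems(1) by (rule card_Diff1_less[rotated])
    obtain J u'' where J: "J \<subseteq> I - {a}" "card J \<le> card M" "\<forall>i\<in>J. u'' i \<ge> 0"
      "\<forall>\<alpha>\<in>M. (\<Sum>i\<in>J. u'' i * g \<alpha> (pts i)) = (\<Sum>i\<in>I - {a}. u' i * g \<alpha> (pts i))"
      using less.hyps[of "I - {a}" u', OF card_less finite_Diff[OF less.prems(1)] a(2)] by blast
    then show ?thesis
      using a(3) by (intro exI[of _ J] exI[of _ u'']) auto
  qed (use less.prems in blast)
qed

section \<open>Existence of cubatures\<close>

definition moment_count :: "'n::finite itself \<Rightarrow> nat \<Rightarrow> nat" where
  "moment_count _ m = card (multi_idx m :: ('n \<Rightarrow> nat) set)"

lemma moment_count_pos: "moment_count TYPE('n::finite) m > 0"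
  unfolding moment_count_def using finite_multi_idx zero_in_multi_idx card_gt_0_iff by blast

text \<open>By Carath\'eodory, \<open>moment_count\<close> weighted points realise the moments of every finite
  convex combination of points of the sphere, so configurations of that size suffice.\<close>
definition config :: "nat \<Rightarrow> (nat \<Rightarrow> real^'n::finite) \<Rightarrow> (nat \<Rightarrow> real) \<Rightarrow> bool" where
  "config m x u \<longleftrightarrow> (\<forall>i<moment_count TYPE('n) m. x i \<in> sphere 0 1 \<and> u i \<in> {0..1}) \<and>
     (\<Sum>i<moment_count TYPE('n) m. u i) = 1"

definition moment_defect :: "nat \<Rightarrow> (nat \<Rightarrow> real^'n::finite) \<Rightarrow> (nat \<Rightarrow> real) \<Rightarrow> real" where
  "moment_defect m x u = (\<Sum>\<alpha>\<in>(multi_idx m :: ('n \<Rightarrow> nat) set).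
     ((\<Sum>i<moment_count TYPE('n) m. u i * monomial \<alpha> (x i)) - sphere_moment \<alpha>)\<^sup>2)"

lemma config_of_convex_combination:
  fixes pts :: "nat \<Rightarrow> real^'n::finite"
  assumes I: "finite I" and pts: "pts ` I \<subseteq> sphere 0 1" and u: "\<And>i. i \<in> I \<Longrightarrow> u i \<ge> 0"
    and sum_u: "(\<Sum>i\<in>I. u i) = 1"
  obtains x w where "config m x w" "\<And>\<alpha>. \<alpha> \<in> (multi_idx m :: ('n \<Rightarrow> nat) set) \<Longrightarrow>
    (\<Sum>i<moment_count TYPE('n) m. w i * monomial \<alpha> (x i)) = (\<Sum>i\<in>I. u i * monomial \<alpha> (pts i))"
proof -
  let ?D = "moment_count TYPE('n) m"
  obtain J u' where J: "J \<subseteq> I" "card J \<le> ?D" "\<forall>i\<in>J. u' i \<ge> 0"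
    "\<forall>\<alpha>\<in>multi_idx m. (\<Sum>i\<in>J. u' i * monomial \<alpha> (pts i)) = (\<Sum>i\<in>I. u i * monomial \<alpha> (pts i))"
    using caratheodory_reduction[OF finite_multi_idx[of m] zero_in_multi_idx[of m],
        where g = monomial and I = I and u = u and pts = pts] I u
    by (auto simp: moment_count_def)
  obtain x w where xw: "\<And>i. i < ?D \<Longrightarrow> x i \<in> sphere 0 1" "\<And>i. w i \<in> insert 0 (u' ` J)"
    "\<And>f. (\<Sum>i<?D. w i * f (x i)) = (\<Sum>j\<in>J. u' j * f (pts j))"
  proof (rule finite_sum_as_padded_sum[of J ?D pts "sphere 0 1" u'])
    show "finite J" using J(1) I finite_subset by blast
    show "pts ` J \<subseteq> sphere 0 1" using J(1) pts by blast
  qed (use J(2) sphere_nonempty in auto)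
  have moments: "(\<Sum>i<?D. w i * monomial \<alpha> (x i)) = (\<Sum>i\<in>I. u i * monomial \<alpha> (pts i))"
    if "\<alpha> \<in> multi_idx m" for \<alpha>
    using xw(3) J(4) that by simp
  have sum_w: "(\<Sum>i<?D. w i) = 1"
    using moments[OF zero_in_multi_idx] sum_u by simp
  have "w i \<ge> 0" for i
    using xw(2)[of i] J(3) by auto
  then have "w i \<le> 1" if "i < ?D" for i
    using sum_w member_le_sum[of i "{..<?D}" w] that by simp
  then have "config m x w"
    using xw(1) sum_w \<open>\<And>i. w i \<ge> 0\<close> by (simp add: config_def)
  then show ?thesis
    using that moments by blast
qed

lemma tendsto_moment_defect:
  assumes "\<And>i. i < moment_count TYPE('n::finite) m \<Longrightarrow> ((\<lambda>k. x k i) \<longlongrightarrow> (x' i :: real^'n)) F"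
    "\<And>i. i < moment_count TYPE('n) m \<Longrightarrow> ((\<lambda>k. u k i) \<longlongrightarrow> u' i) F"
  shows "((\<lambda>k. moment_defect m (x k) (u k)) \<longlongrightarrow> moment_defect m x' u') F"
  unfolding moment_defect_def using assms
  by (intro tendsto_sum tendsto_power tendsto_diff tendsto_mult tendsto_const tendsto_monomial) auto

lemma moment_defect_nonneg: "moment_defect m x u \<ge> 0"
  unfolding moment_defect_def by (intro sum_nonneg) auto

lemma moment_defect_minimizer:
  "\<exists>(x :: nat \<Rightarrow> real^'n::finite) u. config m x u \<and>
     (\<forall>(x' :: nat \<Rightarrow> real^'n) u'. config m x' u' \<longrightarrow> moment_defect m x u \<le> moment_defect m x' u')"
proof -
  let ?D = "moment_count TYPE('n) m"
  define Q where "Q = {moment_defect m x u | (x :: nat \<Rightarrow> real^'n) u. config m x u}"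
  obtain s :: "real^'n" where "s \<in> sphere 0 1"
    using sphere_nonempty by blast
  then have "config m (\<lambda>_. s) (\<lambda>_. 1 / real ?D)"
    using moment_count_pos[where 'n='n and m=m] by (auto simp: config_def)
  then have ne: "Q \<noteq> {}"
    unfolding Q_def by blast
  have bdd: "bdd_below Q"
    unfolding Q_def bdd_below_def using moment_defect_nonneg by blast
  define q where "q = Inf Q"
  have q_le: "q \<le> moment_defect m x u" if "config m x u" for x :: "nat \<Rightarrow> real^'n" and u
    unfolding q_def using that bdd by (intro cInf_lower) (auto simp: Q_def)
  have "\<exists>x u. config m (x :: nat \<Rightarrow> real^'n) u \<and> moment_defect m x u < q + 1 / real (Suc k)" for k
    using cInf_lessD[OF ne, of "q + 1 / real (Suc k)"] unfolding Q_def q_def by auto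
  then obtain xk uk where k: "\<And>k. config m (xk k :: nat \<Rightarrow> real^'n) (uk k)"
    "\<And>k. moment_defect m (xk k) (uk k) < q + 1 / real (Suc k)"
    by metis
  have "compact (sphere (0::real^'n) 1 \<times> {0::real..1})"
    by (intro compact_Times) auto
  moreover have "(xk k i, uk k i) \<in> sphere 0 1 \<times> {0..1}" if "i < ?D" for k i
    using k(1)[of k] that by (auto simp: config_def)
  ultimately obtain l r where r: "strict_mono r" and
    l: "\<forall>i<?D. l i \<in> sphere 0 1 \<times> {0..1} \<and> ((\<lambda>k. (xk (r k) i, uk (r k) i)) \<longlonglongrightarrow> l i)"
    using compact_finite_family_convergent_subseq[of _ ?D "\<lambda>k i. (xk k i, uk k i)"] by blast
  define x where "x i = fst (l i)" for i
  define u where "u i = snd (l i)" for i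
  have lim_x: "(\<lambda>k. xk (r k) i) \<longlonglongrightarrow> x i" and lim_u: "(\<lambda>k. uk (r k) i) \<longlonglongrightarrow> u i"
    if "i < ?D" for i
    using l that tendsto_fst tendsto_snd unfolding x_def u_def by fastforce+
  have "(\<lambda>k. \<Sum>i<?D. uk (r k) i) \<longlonglongrightarrow> (\<Sum>i<?D. u i)"
    by (intro tendsto_sum lim_u) auto
  moreover have "(\<lambda>k. \<Sum>i<?D. uk (r k) i) = (\<lambda>k. 1)"
    using k(1) by (auto simp: config_def)
  ultimately have "(\<Sum>i<?D. u i) = 1"
    using LIMSEQ_unique tendsto_const by metis
  then have cfg: "config m x u"
    using l by (auto simp: config_def x_def u_def mem_Times_iff)
  have "(\<lambda>k. 1 / real (Suc (r k))) \<longlonglongrightarrow> 0"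
    using LIMSEQ_subseq_LIMSEQ[OF LIMSEQ_inverse_real_of_nat r] by (simp add: o_def inverse_eq_divide)
  then have "(\<lambda>k. q + 1 / real (Suc (r k))) \<longlonglongrightarrow> q"
    using tendsto_add[OF tendsto_const[of q]] by fastforce
  moreover have "(\<lambda>k. moment_defect m (xk (r k)) (uk (r k))) \<longlonglongrightarrow> moment_defect m x u"
    by (rule tendsto_moment_defect) (auto intro: lim_x lim_u)
  ultimately have "moment_defect m x u \<le> q"
    using LIMSEQ_le k(2) less_imp_le by blast
  then show ?thesis
    using cfg q_le by (meson order.trans)
qed

lemma nonpos_of_quadratic_perturbation:
  fixes P R :: real
  assumes "\<And>l. 0 < l \<Longrightarrow> l \<le> 1 \<Longrightarrow> 2 * l * P \<le> l\<^sup>2 * R"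
  shows "P \<le> 0"
proof (rule ccontr)
  assume "\<not> P \<le> 0"
  then have P: "P > 0" by simp
  have "R \<ge> 0"
    using assms[of 1] P by simp
  define l where "l = min 1 (P / (R + 1))"
  have l: "0 < l" "l \<le> 1"
    using P \<open>R \<ge> 0\<close> by (auto simp: l_def)
  have "2 * l * P \<le> l\<^sup>2 * R"
    by (rule assms[OF l])
  then have "2 * P \<le> l * R"
    using l by (simp add: power2_eq_square mult.assoc)
  also have "l * R \<le> P / (R + 1) * R"
    using \<open>R \<ge> 0\<close> by (intro mult_right_mono) (auto simp: l_def)
  also have "\<dots> < P"
    using P \<open>R \<ge> 0\<close> by (simp add: field_simps)
  finally show False
    using P by simp
qed

text \<open>First-order optimality: moving the minimiser towards a point \<open>y\<close> of the
  sphere cannot decrease the defect, so the defect vector separates the moment curve from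
  the moments of the minimiser.\<close>
lemma moment_defect_minimizer_variational:
  fixes x :: "nat \<Rightarrow> real^'n::finite"
  assumes cfg: "config m x u"
    and min: "\<And>x' u'. config m (x' :: nat \<Rightarrow> real^'n) u' \<Longrightarrow> moment_defect m x u \<le> moment_defect m x' u'"
    and y: "y \<in> sphere 0 1"
  defines "mom \<equiv> \<lambda>\<alpha>. \<Sum>i<moment_count TYPE('n) m. u i * monomial \<alpha> (x i)"
  shows "(\<Sum>\<alpha>\<in>multi_idx m. (sphere_moment \<alpha> - mom \<alpha>) * (monomial \<alpha> y - mom \<alpha>)) \<le> 0"
proof (rule nonpos_of_quadratic_perturbation)
  let ?D = "moment_count TYPE('n) m" and ?M = "multi_idx m :: ('n \<Rightarrow> nat) set"
  define a where "a \<alpha> = sphere_moment \<alpha> - mom \<alpha>" for \<alpha>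
  define b where "b \<alpha> = monomial \<alpha> y - mom \<alpha>" for \<alpha>
  fix l :: real assume l: "0 < l" "l \<le> 1"
  define pts where "pts = x(?D := y)"
  define v where "v i = (if i = ?D then l else (1 - l) * u i)" for i
  have pts_in: "pts ` {..<Suc ?D} \<subseteq> sphere 0 1"
    and v_nonneg: "\<And>i. i \<in> {..<Suc ?D} \<Longrightarrow> v i \<ge> 0"
    using cfg y l by (auto simp: config_def pts_def v_def less_Suc_eq)
  have v_sum: "(\<Sum>i\<in>{..<Suc ?D}. v i) = 1"
    using cfg by (simp add: v_def config_def sum_distrib_left[symmetric])
  obtain x' u' where cfg': "config m x' u'" and
    mom': "\<And>\<alpha>. \<alpha> \<in> ?M \<Longrightarrow> (\<Sum>i<?D. u' i * monomial \<alpha> (x' i))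
       = (\<Sum>i\<in>{..<Suc ?D}. v i * monomial \<alpha> (pts i))"
    using config_of_convex_combination[OF finite_lessThan pts_in v_nonneg v_sum, where m = m] by blast
  have sum_eq: "(\<Sum>i\<in>{..<Suc ?D}. v i * monomial \<alpha> (pts i)) = mom \<alpha> + l * b \<alpha>" for \<alpha>
  proof -
    have "(\<Sum>i\<in>{..<Suc ?D}. v i * monomial \<alpha> (pts i))
        = (\<Sum>i<?D. (1 - l) * u i * monomial \<alpha> (x i)) + l * monomial \<alpha> y"
      by (simp add: v_def pts_def)
    also have "\<dots> = (1 - l) * mom \<alpha> + l * monomial \<alpha> y"
      by (simp add: mom_def sum_distrib_left mult.assoc)
    finally show ?thesis
      by (simp add: b_def algebra_simps)
  qed
  have "moment_defect m x' u' = (\<Sum>\<alpha>\<in>?M. (l * b \<alpha> - a \<alpha>)\<^sup>2)"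
    unfolding moment_defect_def
  proof (rule sum.cong)
    fix \<alpha> assume "\<alpha> \<in> ?M"
    then have "(\<Sum>i<?D. u' i * monomial \<alpha> (x' i)) - sphere_moment \<alpha> = l * b \<alpha> - a \<alpha>"
      using mom' sum_eq by (simp add: a_def)
    then show "((\<Sum>i<?D. u' i * monomial \<alpha> (x' i)) - sphere_moment \<alpha>)\<^sup>2 = (l * b \<alpha> - a \<alpha>)\<^sup>2"
      by simp
  qed simp
  also have "\<dots> = l\<^sup>2 * (\<Sum>\<alpha>\<in>?M. (b \<alpha>)\<^sup>2) - 2 * l * (\<Sum>\<alpha>\<in>?M. a \<alpha> * b \<alpha>) + (\<Sum>\<alpha>\<in>?M. (a \<alpha>)\<^sup>2)"
    by (simp add: power2_diff sum.distrib sum_subtractf sum_distrib_left power_mult_distrib algebra_simps)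
  finally have "moment_defect m x' u' = \<dots>" .
  moreover have "moment_defect m x u = (\<Sum>\<alpha>\<in>?M. (a \<alpha>)\<^sup>2)"
    unfolding moment_defect_def a_def mom_def by (simp add: power2_commute)
  ultimately show "2 * l * (\<Sum>\<alpha>\<in>?M. a \<alpha> * b \<alpha>) \<le> l\<^sup>2 * (\<Sum>\<alpha>\<in>?M. (b \<alpha>)\<^sup>2)"
    using min[OF cfg'] by linarith
qed

lemma cubature_exists: "\<exists>N. cubature TYPE('n::finite) m N"
proof -
  let ?D = "moment_count TYPE('n) m" and ?M = "multi_idx m :: ('n \<Rightarrow> nat) set"
  obtain x :: "nat \<Rightarrow> real^'n" and u where cfg: "config m x u"
    and min: "\<And>x' u'. config m (x' :: nat \<Rightarrow> real^'n) u' \<Longrightarrow> moment_defect m x u \<le> moment_defect m x' u'"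
    using moment_defect_minimizer[where 'n = 'n and m = m] by blast
  define mom where "mom \<alpha> = (\<Sum>i<?D. u i * monomial \<alpha> (x i))" for \<alpha>
  define a where "a \<alpha> = sphere_moment \<alpha> - mom \<alpha>" for \<alpha>
  have "(\<Sum>\<alpha>\<in>?M. a \<alpha> * monomial \<alpha> y) \<le> (\<Sum>\<alpha>\<in>?M. a \<alpha> * mom \<alpha>)" if "y \<in> sphere 0 1" for y
    using moment_defect_minimizer_variational[OF cfg min that]
    by (simp add: a_def mom_def right_diff_distrib sum_subtractf)
  then have "(\<Sum>\<alpha>\<in>?M. a \<alpha> * sphere_moment \<alpha>) \<le> (\<Sum>\<alpha>\<in>?M. a \<alpha> * mom \<alpha>)"
    by (rule sphere_moment_sum_le[OF finite_multi_idx])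
  then have "(\<Sum>\<alpha>\<in>?M. (a \<alpha>)\<^sup>2) \<le> 0"
    by (simp add: a_def power2_eq_square right_diff_distrib sum_subtractf)
  then have "(\<Sum>\<alpha>\<in>?M. (a \<alpha>)\<^sup>2) = 0"
    by (intro antisym sum_nonneg) auto
  then have "\<forall>\<alpha>\<in>?M. a \<alpha> = 0"
    by (simp add: sum_nonneg_eq_0_iff finite_multi_idx)
  then have "cubature TYPE('n) m ?D"
    using cfg by (intro cubature_of_sphere_moments[where w = u and x = x])
      (auto simp: config_def a_def mom_def)
  then show ?thesis ..
qed

section \<open>The upper bound\<close>

lemma cubature_Nm: "cubature TYPE('n::finite) m (Nm TYPE('n) m)"
  unfolding Nm_eq_Least_cubature using cubature_exists by (rule LeastI_ex)

lemma not_cubature_less_Nm: "k < Nm TYPE('n::finite) m \<Longrightarrow> \<not> cubature TYPE('n) m k"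
  unfolding Nm_eq_Least_cubature by (rule not_less_Least)

lemma Nm_pos: "Nm TYPE('n::finite) m > 0"
  using cubature_Nm[where 'n='n and m=m] by (intro Nat.gr0I) (simp add: cubature_def)

lemma pmf_of_list_weights:
  fixes x :: "nat \<Rightarrow> 'a" and w :: "nat \<Rightarrow> real"
  assumes "\<And>i. i < N \<Longrightarrow> w i \<ge> 0" "(\<Sum>i<N. w i) = 1"
  defines "\<nu> \<equiv> pmf_of_list (map (\<lambda>i. (x i, w i)) [0..<N])"
  shows "set_pmf \<nu> \<subseteq> x ` {..<N}"
    and "measure_pmf.expectation \<nu> f = (\<Sum>i<N. w i * f (x i))"
proof -
  let ?xs = "map (\<lambda>i. (x i, w i)) [0..<N]"
  have wf: "pmf_of_list_wf ?xs"
    by (rule pmf_of_list_wfI) (use assms in \<open>auto simp: sum_list_sum_nth atLeast0LessThan\<close>)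
  show supp: "set_pmf \<nu> \<subseteq> x ` {..<N}"
    using set_pmf_of_list[OF wf] unfolding \<nu>_def by auto
  have pmf: "pmf \<nu> a = (\<Sum>i\<in>{i\<in>{..<N}. x i = a}. w i)" for a
  proof -
    have "pmf \<nu> a = sum_list (map (\<lambda>i. if x i = a then w i else 0) [0..<N])"
      unfolding \<nu>_def pmf_pmf_of_list[OF wf] by (simp add: filter_map o_def sum_list_map_filter')
    also have "\<dots> = (\<Sum>i<N. if x i = a then w i else 0)"
      by (simp add: sum_list_sum_nth atLeast0LessThan cong: if_cong)
    also have "\<dots> = (\<Sum>i\<in>{i\<in>{..<N}. x i = a}. w i)"
      by (subst sum.inter_filter[symmetric]) (auto intro!: sum.cong)
    finally show ?thesis .
  qed
  have "measure_pmf.expectation \<nu> f = (\<Sum>a\<in>x ` {..<N}. f a * pmf \<nu> a)"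
    by (rule integral_measure_pmf_real) (use supp in auto)
  also have "\<dots> = (\<Sum>a\<in>x ` {..<N}. (\<Sum>i\<in>{i\<in>{..<N}. x i = a}. w i * f (x i)))"
    unfolding pmf sum_distrib_left by (intro sum.cong refl) (auto simp: mult.commute)
  also have "\<dots> = (\<Sum>i<N. w i * f (x i))"
    by (rule sum.image_gen[symmetric]) simp
  finally show "measure_pmf.expectation \<nu> f = (\<Sum>i<N. w i * f (x i))" .
qed

lemma Theta_le_Nm:
  assumes "\<theta> > 0"
  shows "Theta TYPE('n::finite) m \<theta> \<le> of_nat (Nm TYPE('n) m)"
proof -
  define N where "N = Nm TYPE('n) m"
  obtain x :: "nat \<Rightarrow> real^'n" and w where xw: "\<forall>i<N. x i \<in> sphere 0 1 \<and> w i \<ge> 0"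
    "(\<Sum>i<N. w i) = 1" "\<forall>p\<in>polys0 m. (\<Sum>i<N. w i * p (x i)) = 0"
    using cubature_Nm[where 'n='n and m=m] unfolding cubature_def N_def by blast
  define \<nu> where "\<nu> = pmf_of_list (map (\<lambda>i. (x i, w i)) [0..<N])"
  have supp: "set_pmf \<nu> \<subseteq> x ` {..<N}"
    and E: "\<And>f. measure_pmf.expectation \<nu> f = (\<Sum>i<N. w i * f (x i))"
    using pmf_of_list_weights[of N w x] xw unfolding \<nu>_def by auto
  have "\<nu> \<in> Mc m"
    unfolding Mc_def using supp xw E by auto
  then have "Theta TYPE('n) m \<theta> \<le> (\<Sum>\<^sub>\<infinity>y\<in>set_pmf \<nu>. ennreal (pmf \<nu> y powr \<theta>))"
    unfolding Theta_def by (rule INF_lower)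
  also have "\<dots> = (\<Sum>y\<in>set_pmf \<nu>. ennreal (pmf \<nu> y powr \<theta>))"
    using supp finite_surj by (intro infsum_finite) blast
  also have "\<dots> \<le> (\<Sum>y\<in>set_pmf \<nu>. 1)"
  proof (intro sum_mono)
    fix y
    have "pmf \<nu> y powr \<theta> \<le> 1 powr \<theta>"
      using assms by (intro powr_mono2) (auto simp: pmf_le_1)
    then show "ennreal (pmf \<nu> y powr \<theta>) \<le> 1"
      by simp
  qed
  also have "\<dots> \<le> of_nat N"
    using card_mono[OF _ supp] card_image_le[of "{..<N}" x] by simp
  finally show ?thesis
    unfolding N_def .
qed

section \<open>The lower bound\<close>

lemma pmf_partial_sum_bound:
  fixes \<nu> :: "'a pmf" and p :: "'a \<Rightarrow> real"
  assumes E: "measure_pmf.expectation \<nu> p = 0" and B: "\<And>x. x \<in> set_pmf \<nu> \<Longrightarrow> \<bar>p x\<bar> \<le> B"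
    and A: "finite A"
  shows "\<bar>\<Sum>a\<in>A. pmf \<nu> a * p a\<bar> \<le> B * (1 - measure_pmf.prob \<nu> A)"
proof -
  let ?E = "measure_pmf.expectation \<nu>"
  have int: "integrable (measure_pmf \<nu>) (\<lambda>x. indicator S x * p x)" for S
    by (rule measure_pmf.integrable_const_bound[where B="\<bar>B\<bar>"])
      (use B in \<open>force simp: AE_measure_pmf_iff indicator_def\<close>)+
  have "?E p = ?E (\<lambda>x. indicator A x * p x + indicator (- A) x * p x)"
    by (intro Bochner_Integration.integral_cong) (auto simp: indicator_def)
  also have "\<dots> = ?E (\<lambda>x. indicator A x * p x) + ?E (\<lambda>x. indicator (- A) x * p x)"
    by (rule Bochner_Integration.integral_add[OF int int])
  also have "?E (\<lambda>x. indicator A x * p x) = (\<Sum>a\<in>A. pmf \<nu> a * p a)"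
    by (subst integral_measure_pmf_real[OF A])
      (auto simp: indicator_def intro!: sum.cong split: if_splits)
  finally have split: "(\<Sum>a\<in>A. pmf \<nu> a * p a) = - ?E (\<lambda>x. indicator (- A) x * p x)"
    using E by simp
  have "\<bar>?E (\<lambda>x. indicator (- A) x * p x)\<bar> \<le> ?E (\<lambda>x. \<bar>indicator (- A) x * p x\<bar>)"
    by (rule integral_abs_bound)
  also have "\<dots> \<le> ?E (\<lambda>x. indicator (- A) x * B)"
  proof (rule integral_mono_AE[OF integrable_abs[OF int]])
    show "integrable (measure_pmf \<nu>) (\<lambda>x. indicator (- A) x * B)"
      by (rule measure_pmf.integrable_const_bound[where B="\<bar>B\<bar>"])
        (auto simp: AE_measure_pmf_iff indicator_def)
  qed (use B in \<open>auto simp: AE_measure_pmf_iff indicator_def\<close>)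
  also have "\<dots> = B * (1 - measure_pmf.prob \<nu> A)"
    using measure_pmf.prob_compl[of A \<nu>] by (simp add: Compl_eq_Diff_UNIV)
  finally show ?thesis
    unfolding split by simp
qed

lemma cubature_of_limit:
  fixes x :: "nat \<Rightarrow> nat \<Rightarrow> real^'n::finite" and w :: "nat \<Rightarrow> nat \<Rightarrow> real"
  assumes nodes: "\<And>k i. i < N \<Longrightarrow> (x k i, w k i) \<in> sphere 0 1 \<times> {0..1}"
    and mass: "(\<lambda>k. \<Sum>i<N. w k i) \<longlonglongrightarrow> 1"
    and exact: "\<And>p :: real^'n \<Rightarrow> real. p \<in> polys0 m \<Longrightarrow> (\<lambda>k. \<Sum>i<N. w k i * p (x k i)) \<longlonglongrightarrow> 0"
  shows "cubature TYPE('n) m N"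
proof -
  have "compact (sphere (0::real^'n) 1 \<times> {0::real..1})"
    by (intro compact_Times) auto
  with nodes obtain l r where r: "strict_mono r" and
    l: "\<forall>i<N. l i \<in> sphere 0 1 \<times> {0..1} \<and> ((\<lambda>k. (x (r k) i, w (r k) i)) \<longlonglongrightarrow> l i)"
    using compact_finite_family_convergent_subseq[where D = N and f = "\<lambda>k i. (x k i, w k i)"]
    by blast
  have lim_x: "(\<lambda>k. x (r k) i) \<longlonglongrightarrow> fst (l i)" and lim_w: "(\<lambda>k. w (r k) i) \<longlonglongrightarrow> snd (l i)"
    if "i < N" for i
    using l that tendsto_fst tendsto_snd by fastforce+
  show ?thesis
    unfolding cubature_def
  proof (intro exI conjI allI impI ballI)
    show "fst (l i) \<in> sphere 0 1" "snd (l i) \<ge> 0" if "i < N" for i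
      using l that by (auto simp: mem_Times_iff)
    have "(\<lambda>k. \<Sum>i<N. w (r k) i) \<longlonglongrightarrow> (\<Sum>i<N. snd (l i))"
      by (intro tendsto_sum lim_w) auto
    moreover have "(\<lambda>k. \<Sum>i<N. w (r k) i) \<longlonglongrightarrow> 1"
      using LIMSEQ_subseq_LIMSEQ[OF mass r] by (simp add: o_def)
    ultimately show "(\<Sum>i<N. snd (l i)) = 1"
      by (rule LIMSEQ_unique)
  next
    fix p :: "real^'n \<Rightarrow> real" assume p: "p \<in> polys0 m"
    then have "p \<in> polys m"
      by (simp add: polys0_def)
    then have "(\<lambda>k. \<Sum>i<N. w (r k) i * p (x (r k) i)) \<longlonglongrightarrow> (\<Sum>i<N. snd (l i) * p (fst (l i)))"
      by (intro tendsto_sum tendsto_mult lim_w tendsto_polys[of p m] lim_x) auto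
    moreover have "(\<lambda>k. \<Sum>i<N. w (r k) i * p (x (r k) i)) \<longlonglongrightarrow> 0"
      using LIMSEQ_subseq_LIMSEQ[OF exact[OF p] r] by (simp add: o_def)
    ultimately show "(\<Sum>i<N. snd (l i) * p (fst (l i))) = 0"
      by (rule LIMSEQ_unique)
  qed
qed

lemma pmf_partial_sum_as_padded_sum:
  fixes \<nu> :: "'a pmf"
  assumes supp: "set_pmf \<nu> \<subseteq> S" and A: "finite A" "card A \<le> D"
  shows "\<exists>x w. (\<forall>i<D. (x i, w i) \<in> S \<times> {0..1}) \<and>
    (\<forall>f. (\<Sum>i<D. w i * f (x i)) = (\<Sum>a\<in>A. pmf \<nu> a * f a))"
proof -
  let ?A = "A \<inter> set_pmf \<nu>"
  obtain x w where xw: "\<And>i. i < D \<Longrightarrow> x i \<in> S" "\<And>i. w i \<in> insert 0 (pmf \<nu> ` ?A)"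
    "\<And>f. (\<Sum>i<D. w i * f (x i)) = (\<Sum>a\<in>?A. pmf \<nu> a * id f a)"
  proof (rule finite_sum_as_padded_sum[of ?A D id S "pmf \<nu>"])
    show "card ?A \<le> D"
      using A card_mono[of A ?A] by simp
    show "S \<noteq> {}"
      using supp set_pmf_not_empty[of \<nu>] by blast
  qed (use A supp in auto)
  moreover have "(\<Sum>a\<in>?A. pmf \<nu> a * f a) = (\<Sum>a\<in>A. pmf \<nu> a * f a)" for f
    using A(1) by (intro sum.mono_neutral_left) (auto simp: set_pmf_eq)
  moreover have "w i \<in> {0..1}" for i
    using xw(2)[of i] by (auto simp: pmf_le_1)
  ultimately show ?thesis
    by (intro exI[of _ x] exI[of _ w]) auto
qed

text \<open>Otherwise a limit of measures concentrating on fewer than \<open>Nm\<close> points would be a cubature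
  with fewer than \<open>Nm\<close> nodes.\<close>
lemma Mc_mass_on_small_sets:
  obtains \<delta> :: real where "\<delta> > 0" "\<And>\<nu> A. \<nu> \<in> (Mc m :: (real^'n::finite) pmf set) \<Longrightarrow> finite A \<Longrightarrow>
    card A < Nm TYPE('n) m \<Longrightarrow> measure_pmf.prob \<nu> A \<le> 1 - \<delta>"
proof (rule ccontr)
  define N where "N = Nm TYPE('n) m"
  assume "\<not> thesis"
  with that have "\<exists>\<nu> A. \<nu> \<in> (Mc m :: (real^'n) pmf set) \<and> finite A \<and> card A < N \<and>
      measure_pmf.prob \<nu> A > 1 - 1 / real (Suc k)" for k
    unfolding N_def by (metis not_le of_nat_0_less_iff zero_less_Suc zero_less_divide_1_iff)
  then obtain \<nu> A where \<nu>: "\<And>k. \<nu> k \<in> (Mc m :: (real^'n) pmf set)"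
    and A: "\<And>k. finite (A k)" "\<And>k. card (A k) < N"
    and prob: "\<And>k. measure_pmf.prob (\<nu> k) (A k) > 1 - 1 / real (Suc k)"
    by metis
  have supp: "set_pmf (\<nu> k) \<subseteq> sphere 0 1" for k
    using \<nu> by (auto simp: Mc_def)
  have "\<forall>k. \<exists>x w. (\<forall>i<N - 1. (x i, w i) \<in> sphere 0 1 \<times> {0..1}) \<and>
      (\<forall>f. (\<Sum>i<N - 1. w i * f (x i)) = (\<Sum>a\<in>A k. pmf (\<nu> k) a * f a))"
  proof
    fix k
    show "\<exists>x w. (\<forall>i<N - 1. (x i, w i) \<in> sphere 0 1 \<times> {0..1}) \<and>
      (\<forall>f. (\<Sum>i<N - 1. w i * f (x i)) = (\<Sum>a\<in>A k. pmf (\<nu> k) a * f a))"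
      using A(2)[of k] by (intro pmf_partial_sum_as_padded_sum[OF supp A(1)]) simp
  qed
  then obtain x :: "nat \<Rightarrow> nat \<Rightarrow> real^'n" and w
    where nodes: "\<And>k i. i < N - 1 \<Longrightarrow> (x k i, w k i) \<in> sphere 0 1 \<times> {0..1}"
    and sums: "\<And>k f. (\<Sum>i<N - 1. w k i * f (x k i)) = (\<Sum>a\<in>A k. pmf (\<nu> k) a * f a)"
    unfolding choice_iff by blast
  have mass_k: "(\<Sum>i<N - 1. w k i) = measure_pmf.prob (\<nu> k) (A k)" for k
    using sums[of k "\<lambda>_. 1"] A(1) by (simp add: measure_measure_pmf_finite)
  have lim0: "(\<lambda>k. 1 / real (Suc k)) \<longlonglongrightarrow> 0"
    using LIMSEQ_inverse_real_of_nat by (simp add: inverse_eq_divide)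
  have "cubature TYPE('n) m (N - 1)"
  proof (rule cubature_of_limit[OF nodes])
    have "\<forall>k. norm ((\<Sum>i<N - 1. w k i) - 1) \<le> 1 / real (Suc k)"
    proof
      fix k
      show "norm ((\<Sum>i<N - 1. w k i) - 1) \<le> 1 / real (Suc k)"
        using prob[of k] measure_pmf.prob_le_1[of "\<nu> k" "A k"]
        unfolding real_norm_def mass_k by (simp add: abs_le_iff)
    qed
    from Lim_null_comparison[OF always_eventually[OF this] lim0]
    show "(\<lambda>k. \<Sum>i<N - 1. w k i) \<longlonglongrightarrow> 1"
      by (rule LIM_zero_cancel)
  next
    fix p :: "real^'n \<Rightarrow> real" assume p: "p \<in> polys0 m"
    then obtain B where B: "\<And>x. x \<in> sphere 0 1 \<Longrightarrow> \<bar>p x\<bar> \<le> B"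
      using polys_bounded_on_sphere[of p m] by (auto simp: polys0_def)
    obtain s :: "real^'n" where "s \<in> sphere 0 1"
      using sphere_nonempty by blast
    then have B_nonneg: "B \<ge> 0"
      using B[of s] abs_ge_zero[of "p s"] by linarith
    have "\<forall>k. norm (\<Sum>i<N - 1. w k i * p (x k i)) \<le> B * (1 / real (Suc k))"
    proof
      fix k
      have "\<bar>\<Sum>a\<in>A k. pmf (\<nu> k) a * p a\<bar> \<le> B * (1 - measure_pmf.prob (\<nu> k) (A k))"
        using \<nu>[of k] p B supp[of k] A(1) by (intro pmf_partial_sum_bound) (auto simp: Mc_def)
      also have "\<dots> \<le> B * (1 / real (Suc k))"
        using prob[of k] B_nonneg by (intro mult_left_mono) auto
      finally show "norm (\<Sum>i<N - 1. w k i * p (x k i)) \<le> B * (1 / real (Suc k))"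
        unfolding real_norm_def sums .
    qed
    from Lim_null_comparison[OF always_eventually[OF this] tendsto_mult_right_zero[OF lim0]]
    show "(\<lambda>k. \<Sum>i<N - 1. w k i * p (x k i)) \<longlonglongrightarrow> 0" .
  qed
  moreover have "N - 1 < N"
    using Nm_pos[where 'n='n and m=m] by (simp add: N_def)
  ultimately show False
    using not_cubature_less_Nm unfolding N_def by blast
qed

lemma finite_subset_prob_gt:
  fixes \<nu> :: "'a pmf"
  assumes "\<epsilon> > 0"
  obtains F where "finite F" "F \<subseteq> set_pmf \<nu>" "measure_pmf.prob \<nu> F > 1 - \<epsilon>"
proof -
  define g where "g = from_nat_into (set_pmf \<nu>)"
  have union: "(\<Union>k. g ` {..<k}) = set_pmf \<nu>"
    unfolding image_UN[symmetric] UN_lessThan_UNIV g_def by (simp add: set_pmf_not_empty)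
  moreover have "incseq (\<lambda>k. g ` {..<k})"
    by (auto simp: incseq_def)
  ultimately have "(\<lambda>k. measure_pmf.prob \<nu> (g ` {..<k})) \<longlonglongrightarrow> measure_pmf.prob \<nu> (set_pmf \<nu>)"
    using measure_pmf.finite_Lim_measure_incseq[of "\<lambda>k. g ` {..<k}"] by simp
  moreover have "measure_pmf.prob \<nu> (set_pmf \<nu>) = 1"
    using measure_Int_set_pmf[of \<nu> UNIV] by simp
  ultimately have "\<forall>\<^sub>F k in sequentially. measure_pmf.prob \<nu> (g ` {..<k}) > 1 - \<epsilon>"
    using assms by (intro order_tendstoD) auto
  then obtain k where "measure_pmf.prob \<nu> (g ` {..<k}) > 1 - \<epsilon>"
    by (meson eventually_sequentially order.refl)
  moreover have "g ` {..<k} \<subseteq> set_pmf \<nu>"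
    using union UN_upper[of k UNIV "\<lambda>k. g ` {..<k}"] by simp
  ultimately show ?thesis
    using that[of "g ` {..<k}"] by blast
qed

lemma scaled_le_powr:
  fixes p t \<theta> :: real
  assumes p: "0 < p" "p < t" and t: "t < 1" and \<theta>: "0 < \<theta>" "\<theta> \<le> 1/2"
  shows "p / sqrt t \<le> p powr \<theta>"
proof -
  have "1 / sqrt t = t powr (-1/2)"
    using p by (simp add: powr_minus_divide powr_half_sqrt[symmetric])
  also have "\<dots> \<le> t powr (\<theta> - 1)"
    using p t \<theta> by (intro powr_mono') auto
  also have "\<dots> \<le> p powr (\<theta> - 1)"
    using p \<theta> by (intro powr_mono2') auto
  finally have "p * (1 / sqrt t) \<le> p * p powr (\<theta> - 1)"
    using p by (intro mult_left_mono) auto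
  also have "\<dots> = p powr \<theta>"
    using p by (simp add: powr_add[symmetric] powr_diff)
  finally show ?thesis
    by simp
qed

text \<open>Either \<open>N\<close> atoms of \<open>F\<close> have mass at least \<open>t\<close>, or mass \<open>d/2\<close> sits on atoms of mass
  below \<open>t\<close>, and such an atom of mass \<open>p\<close> contributes \<open>p powr \<theta> \<ge> p / sqrt t\<close>.\<close>
lemma powr_sum_lower_bound:
  fixes \<nu> :: "'a pmf" and N :: nat
  assumes small: "\<And>A. finite A \<Longrightarrow> card A < N \<Longrightarrow> measure_pmf.prob \<nu> A \<le> 1 - d"
    and d: "0 < d" "d \<le> 1/2" and N: "N \<ge> 1" and \<theta>: "0 < \<theta>" "\<theta> \<le> 1/2"
    and F: "finite F" "F \<subseteq> set_pmf \<nu>" "measure_pmf.prob \<nu> F > 1 - d/2"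
  defines "t \<equiv> (d / (2 * N))\<^sup>2"
  shows "real N * t powr \<theta> \<le> (\<Sum>y\<in>F. pmf \<nu> y powr \<theta>)"
proof -
  have root: "0 < d / (2 * N)" "d / (2 * N) < 1"
    using d N by (auto simp: field_simps)
  then have t: "0 < t" "t < 1" "sqrt t = d / (2 * N)"
    unfolding t_def using d N by (simp_all add: power_less_one_iff)
  define G where "G = {y\<in>F. pmf \<nu> y \<ge> t}"
  have G: "finite G" "G \<subseteq> F"
    using F by (auto simp: G_def)
  show ?thesis
  proof (cases "card G \<ge> N")
    case True
    have "real N * t powr \<theta> \<le> (\<Sum>y\<in>G. t powr \<theta>)"
      using True by (simp add: mult_right_mono)
    also have "\<dots> \<le> (\<Sum>y\<in>G. pmf \<nu> y powr \<theta>)"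
      using \<theta> t by (intro sum_mono powr_mono2) (auto simp: G_def)
    also have "\<dots> \<le> (\<Sum>y\<in>F. pmf \<nu> y powr \<theta>)"
      using F G by (intro sum_mono2) auto
    finally show ?thesis .
  next
    case False
    then have "measure_pmf.prob \<nu> G \<le> 1 - d"
      using small G by auto
    moreover have "measure_pmf.prob \<nu> F = measure_pmf.prob \<nu> G + measure_pmf.prob \<nu> (F - G)"
      using G F by (simp add: measure_measure_pmf_finite sum.subset_diff[of G F])
    ultimately have big: "measure_pmf.prob \<nu> (F - G) \<ge> d / 2"
      using F by linarith
    have "t powr \<theta> \<le> 1"
      using t \<theta> powr_mono2[of \<theta> t 1] by simp
    then have "real N * t powr \<theta> \<le> real N"
      by (simp add: mult_left_le)
    also have "real N = (d / 2) / sqrt t"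
      using t d N by (simp add: field_simps)
    also have "\<dots> \<le> measure_pmf.prob \<nu> (F - G) / sqrt t"
      using big root by (intro divide_right_mono) (auto simp: t(3))
    also have "\<dots> = (\<Sum>y\<in>F - G. pmf \<nu> y / sqrt t)"
      using F by (simp add: measure_measure_pmf_finite sum_divide_distrib)
    also have "\<dots> \<le> (\<Sum>y\<in>F - G. pmf \<nu> y powr \<theta>)"
      using F t \<theta> by (intro sum_mono scaled_le_powr) (auto simp: G_def pmf_positive)
    also have "\<dots> \<le> (\<Sum>y\<in>F. pmf \<nu> y powr \<theta>)"
      using F by (intro sum_mono2) auto
    finally show ?thesis .
  qed
qed

lemma Theta_lower_bound:
  obtains t :: real where "t > 0"
    "\<And>\<theta>. 0 < \<theta> \<Longrightarrow> \<theta> \<le> 1/2 \<Longrightarrow> ennreal (real (Nm TYPE('n::finite) m) * t powr \<theta>) \<le> Theta TYPE('n) m \<theta>"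
proof -
  define N where "N = Nm TYPE('n) m"
  obtain \<delta> :: real where \<delta>: "\<delta> > 0" "\<And>\<nu> A. \<nu> \<in> (Mc m :: (real^'n) pmf set) \<Longrightarrow> finite A \<Longrightarrow>
      card A < N \<Longrightarrow> measure_pmf.prob \<nu> A \<le> 1 - \<delta>"
    using Mc_mass_on_small_sets[where 'n = 'n and m = m] unfolding N_def by blast
  define d where "d = min \<delta> (1/2)"
  have d: "0 < d" "d \<le> 1/2"
    using \<delta> by (auto simp: d_def)
  have N: "N \<ge> 1"
    using Nm_pos[where 'n='n and m=m] by (simp add: N_def)
  define t where "t = (d / (2 * N))\<^sup>2"
  have "ennreal (real N * t powr \<theta>) \<le> Theta TYPE('n) m \<theta>" if \<theta>: "0 < \<theta>" "\<theta> \<le> 1/2" for \<theta>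
    unfolding Theta_def
  proof (rule INF_greatest)
    fix \<nu> :: "(real^'n) pmf" assume \<nu>: "\<nu> \<in> Mc m"
    obtain F where F: "finite F" "F \<subseteq> set_pmf \<nu>" "measure_pmf.prob \<nu> F > 1 - d/2"
      using finite_subset_prob_gt[of "d/2" \<nu>] d by auto
    have "\<And>A. finite A \<Longrightarrow> card A < N \<Longrightarrow> measure_pmf.prob \<nu> A \<le> 1 - d"
      using \<delta>(2)[OF \<nu>] by (force simp: d_def)
    then have "real N * t powr \<theta> \<le> (\<Sum>y\<in>F. pmf \<nu> y powr \<theta>)"
      unfolding t_def by (rule powr_sum_lower_bound[OF _ d N \<theta> F])
    then have "ennreal (real N * t powr \<theta>) \<le> (\<Sum>y\<in>F. ennreal (pmf \<nu> y powr \<theta>))"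
      by (simp add: ennreal_leI sum_ennreal)
    also have "\<dots> \<le> (\<Sum>\<^sub>\<infinity>y\<in>set_pmf \<nu>. ennreal (pmf \<nu> y powr \<theta>))"
      using F by (subst nonneg_infsum_complete) (auto intro!: SUP_upper)
    finally show "ennreal (real N * t powr \<theta>) \<le> (\<Sum>\<^sub>\<infinity>y\<in>set_pmf \<nu>. ennreal (pmf \<nu> y powr \<theta>))" .
  qed
  moreover have "t > 0"
    using d N by (simp add: t_def)
  ultimately show ?thesis
    using that unfolding N_def by blast
qed

theorem mainTheorem7:
  assumes "CARD('n::finite) \<ge> 2"
  shows "((\<lambda>\<theta>. Theta TYPE('n) m \<theta>) \<longlongrightarrow> of_nat (Nm TYPE('n) m)) (at_right 0)"
proof -
  let ?N = "Nm TYPE('n) m"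
  obtain t where t: "t > 0" and lower:
    "\<And>\<theta>. 0 < \<theta> \<Longrightarrow> \<theta> \<le> 1/2 \<Longrightarrow> ennreal (real ?N * t powr \<theta>) \<le> Theta TYPE('n) m \<theta>"
    using Theta_lower_bound[where 'n = 'n and m = m] by blast
  have "((\<lambda>\<theta>. real ?N * t powr \<theta>) \<longlongrightarrow> real ?N * t powr 0) (at_right 0)"
    using t by (intro tendsto_intros) auto
  then have lim: "((\<lambda>\<theta>. ennreal (real ?N * t powr \<theta>)) \<longlongrightarrow> of_nat ?N) (at_right 0)"
    using t by (auto dest: tendsto_ennrealI simp: ennreal_of_nat_eq_real_of_nat)
  have small: "\<forall>\<^sub>F \<theta> in at_right (0::real). 0 < \<theta> \<and> \<theta> \<le> 1/2"
    using eventually_at_right_real[of 0 "1/2"] by (auto elim!: eventually_mono)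
  show ?thesis
  proof (rule tendsto_sandwich[OF _ _ lim tendsto_const])
    show "\<forall>\<^sub>F \<theta> in at_right 0. ennreal (real ?N * t powr \<theta>) \<le> Theta TYPE('n) m \<theta>"
      using small by (auto elim!: eventually_mono intro: lower)
    show "\<forall>\<^sub>F \<theta> in at_right 0. Theta TYPE('n) m \<theta> \<le> of_nat ?N"
      using small by (auto elim!: eventually_mono intro: Theta_le_Nm)
  qed
qed

end
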